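(* Let $\Omega\subset\mathbb R^d$ be a bounded Borel set, $f:\Omega\to[0,\infty)$ with $\int_\Omega f=1$, $p\ge1$, $x_1,\dots,x_k\in\Omega$, and $h_1,\dots,h_k:[0,1]\to[0,\infty)$ differentiable in $]0,1]$ and continuous at $0$, such that $\eta_i(t)=t\,h_i(t)$ is convex for each $i$. Then there exists at most one partition $(A_i)_{i=1}^k$ of $\Omega$ (up to $f$-negligible sets) such that for every $i$, with $c_j=\int_{A_j}f\,dx$, $$A_i=\big\{x\in\Omega:\ |x-x_i|^p+h_i(c_i)+c_ih_i'(c_i)<|x-x_j|^p+h_j(c_j)+c_jh_j'(c_j)\ \ \forall j\ne i\big\}$$ up to $f$-negligible sets.
   Context: A partition of $\Omega$ is a family of Borel sets pairwise disjoint up to $f$-negligible sets whose union has full $f\,dx$-measure. "Differentiable in $]0,1]$" means differentiable on $]0,1[$ with a left derivative at $1$; the convention $0\cdot h_i'(0)=0$ is used. *)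

theory Defs
  imports "HOL-Analysis.Analysis"
begin

definition f_negligible :: "'a::euclidean_space set \<Rightarrow> ('a \<Rightarrow> real) \<Rightarrow> 'a set \<Rightarrow> bool" where
  "f_negligible \<Omega> f S \<longleftrightarrow> (\<integral>\<^sup>+ x \<in> S \<inter> \<Omega>. ennreal (f x) \<partial>lebesgue) = 0"

definition f_sym_negligible :: "'a::euclidean_space set \<Rightarrow> ('a \<Rightarrow> real) \<Rightarrow> 'a set \<Rightarrow> 'a set \<Rightarrow> bool" where
  "f_sym_negligible \<Omega> f S T \<longleftrightarrow> f_negligible \<Omega> f ((S - T) \<union> (T - S))"

definition f_partition :: "'a::euclidean_space set \<Rightarrow> ('a \<Rightarrow> real) \<Rightarrow> nat \<Rightarrow> (nat \<Rightarrow> 'a set) \<Rightarrow> bool" where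
  "f_partition \<Omega> f k A \<longleftrightarrow>
     (\<forall>i<k. A i \<in> sets borel) \<and>
     (\<forall>i<k. \<forall>j<k. i \<noteq> j \<longrightarrow> f_negligible \<Omega> f (A i \<inter> A j)) \<and>
     f_negligible \<Omega> f (\<Omega> - (\<Union>i<k. A i))"

text \<open>Derivative of h on ]0,1] (two-sided in the interior, left derivative at 1).\<close>
definition dh :: "(real \<Rightarrow> real) \<Rightarrow> real \<Rightarrow> real" where
  "dh h c = (THE D. (h has_real_derivative D) (at c within {0<..1}))"

definition marg :: "(real \<Rightarrow> real) \<Rightarrow> real \<Rightarrow> real" where
  "marg h c = h c + (if c = 0 then 0 else c * dh h c)"

definition mass :: "'a::euclidean_space set \<Rightarrow> ('a \<Rightarrow> real) \<Rightarrow> 'a set \<Rightarrow> real" where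
  "mass \<Omega> f S = (LINT x:(S \<inter> \<Omega>)|lebesgue. f x)"

end

theory Submission
  imports Defs
begin

text \<open>
  Write \<open>w\<^sub>i = h\<^sub>i(c\<^sub>i) + c\<^sub>i h\<^sub>i'(c\<^sub>i)\<close>; this is the derivative of the convex function
  \<open>t h\<^sub>i(t)\<close> at \<open>c\<^sub>i\<close>, hence nondecreasing in the mass \<open>c\<^sub>i\<close>. Given two admissible
  partitions \<open>A\<close> and \<open>B\<close>, choose \<open>i\<close> minimising \<open>w\<^sup>B\<^sub>i - w\<^sup>A\<^sub>i\<close>. Passing from the weights
  \<open>w\<^sup>A\<close> to \<open>w\<^sup>B\<close> raises the weight of cell \<open>i\<close> the least, so this Laguerre cell can only grow:
  \<open>A\<^sub>i \<subseteq> B\<^sub>i\<close> up to negligible sets, hence \<open>c\<^sup>A\<^sub>i \<le> c\<^sup>B\<^sub>i\<close> and \<open>w\<^sup>A\<^sub>i \<le> w\<^sup>B\<^sub>i\<close>. So \<open>w\<^sup>B - w\<^sup>A \<ge> 0\<close>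
  everywhere, symmetrically \<open>w\<^sup>B - w\<^sup>A \<le> 0\<close>, and equal weights give equal cells.
\<close>

lemma has_real_derivative_dh:
  assumes "h differentiable (at c within {0<..1})" "0 < c" "c \<le> 1"
  shows "(h has_real_derivative dh h c) (at c within {0<..1})"
proof -
  obtain D where D: "(h has_real_derivative D) (at c within {0<..1})"
    using assms(1) real_differentiable_def by blast
  have "at c within {0<..1} \<noteq> bot"
    using assms(2,3) islimpt_Ioc[of 0 1 c] trivial_limit_within[of c "{0<..1}"] by simp
  with D have "dh h c = D"
    unfolding dh_def by (intro the_equality) (auto intro: has_field_derivative_unique)
  with D show ?thesis by simp
qed

lemma has_real_derivative_times_marg:
  assumes "h differentiable (at c within {0<..1})" "0 < c" "c \<le> 1"
  shows "((\<lambda>t. t * h t) has_real_derivative marg h c) (at c within {0<..1})"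
  using DERIV_mult[OF DERIV_ident has_real_derivative_dh[OF assms]] assms(2)
  by (simp add: marg_def mult.commute)

lemma has_real_derivative_at_left_if_within:
  assumes "(f has_real_derivative D) (at c within S)" "a < c" "{a..c} \<subseteq> S"
  shows "(f has_real_derivative D) (at_left c)"
proof -
  have "(f has_real_derivative D) (at c within {a..c})"
    using assms(1,3) by (rule DERIV_subset)
  then show ?thesis using at_within_Icc_at_left[OF \<open>a < c\<close>] by simp
qed

lemma has_real_derivative_at_right_if_within:
  assumes "(f has_real_derivative D) (at c within S)" "c < b" "{c..b} \<subseteq> S"
  shows "(f has_real_derivative D) (at_right c)"
proof -
  have "(f has_real_derivative D) (at c within {c..b})"
    using assms(1,3) by (rule DERIV_subset)
  then show ?thesis using at_within_Icc_at_right[OF \<open>c < b\<close>] by simp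
qed

lemma convex_on_slope_le_left_derivative:
  fixes \<eta> :: "real \<Rightarrow> real"
  assumes cvx: "convex_on {s..t} \<eta>" and "s < t" and D: "(\<eta> has_real_derivative D) (at_left t)"
  shows "(\<eta> t - \<eta> s) / (t - s) \<le> D"
proof -
  have "((\<lambda>z. (\<eta> z - \<eta> t) / (z - t)) \<longlongrightarrow> D) (at_left t)"
    using D by (simp add: has_field_derivative_iff)
  moreover have "eventually (\<lambda>z. (\<eta> t - \<eta> s) / (t - s) \<le> (\<eta> z - \<eta> t) / (z - t)) (at_left t)"
    using eventually_at_left_real[OF \<open>s < t\<close>]
  proof eventually_elim
    case (elim z)
    then have "(\<eta> s - \<eta> t) / (s - t) \<le> (\<eta> z - \<eta> t) / (z - t)"
      using convex_on_slope_le(2)[OF cvx, of s t z] \<open>s < t\<close> by auto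
    then show ?case using minus_divide_divide[of "\<eta> t - \<eta> s" "t - s"] by simp
  qed
  ultimately show ?thesis by (rule tendsto_lowerbound) simp
qed

lemma convex_on_right_derivative_le_slope:
  fixes \<eta> :: "real \<Rightarrow> real"
  assumes cvx: "convex_on {s..t} \<eta>" and "s < t" and D: "(\<eta> has_real_derivative D) (at_right s)"
  shows "D \<le> (\<eta> t - \<eta> s) / (t - s)"
proof -
  have "((\<lambda>z. (\<eta> z - \<eta> s) / (z - s)) \<longlongrightarrow> D) (at_right s)"
    using D by (simp add: has_field_derivative_iff)
  moreover have "eventually (\<lambda>z. (\<eta> z - \<eta> s) / (z - s) \<le> (\<eta> t - \<eta> s) / (t - s)) (at_right s)"
    using eventually_at_right_real[OF \<open>s < t\<close>]
  proof eventually_elim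
    case (elim z)
    then have "(\<eta> s - \<eta> z) / (s - z) \<le> (\<eta> s - \<eta> t) / (s - t)"
      using convex_on_slope_le(1)[OF cvx, of s t z] \<open>s < t\<close> by auto
    then show ?case
      using minus_divide_divide[of "\<eta> z - \<eta> s" "z - s"] minus_divide_divide[of "\<eta> t - \<eta> s" "t - s"]
      by simp
  qed
  ultimately show ?thesis by (rule tendsto_upperbound) simp
qed

text \<open>With \<open>\<eta>(t) = t h(t)\<close> and \<open>\<eta>(0) = 0\<close>, \<open>h(t)\<close> is the slope of \<open>\<eta>\<close> between \<open>0\<close> and \<open>t\<close>.\<close>

lemma mono_on_if_convex_on_times:
  fixes h :: "real \<Rightarrow> real"
  assumes cvx: "convex_on {0..b} (\<lambda>t. t * h t)" and cont0: "continuous (at 0 within {0..b}) h"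
  shows "mono_on {0..b} h"
proof -
  have pos: "h s \<le> h t" if "0 < s" "s < t" "t \<le> b" for s t
  proof -
    have "(0 * h 0 - s * h s) / (0 - s) \<le> (0 * h 0 - t * h t) / (0 - t)"
      using convex_on_slope_le(1)[OF cvx, of 0 t s] that by auto
    then show ?thesis using that by simp
  qed
  have zero: "h 0 \<le> h t" if "0 < t" "t \<le> b" for t
  proof -
    have "at 0 within {0..b} = at_right (0::real)"
      by (intro at_within_Icc_at_right) (use that in linarith)
    then have "(h \<longlongrightarrow> h 0) (at_right 0)"
      using cont0 by (simp add: continuous_within)
    moreover have "eventually (\<lambda>z. h z \<le> h t) (at_right 0)"
      using eventually_at_right_real[OF \<open>0 < t\<close>] by eventually_elim (use pos that in auto)
    ultimately show ?thesis by (rule tendsto_upperbound) simp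
  qed
  show ?thesis
  proof (rule mono_onI)
    fix s t :: real assume "s \<in> {0..b}" "t \<in> {0..b}" "s \<le> t"
    then consider "s = t" | "s = 0" "0 < t" | "0 < s" "s < t" by fastforce
    then show "h s \<le> h t" using pos zero \<open>t \<in> {0..b}\<close> by cases auto
  qed
qed

lemma marg_mono_on:
  fixes h :: "real \<Rightarrow> real"
  assumes diff: "\<forall>t\<in>{0<..1}. h differentiable (at t within {0<..1})"
    and cont0: "continuous (at 0 within {0..1}) h"
    and cvx: "convex_on {0..1} (\<lambda>t. t * h t)"
  shows "mono_on {0..1} (marg h)"
proof (rule mono_onI)
  define \<eta> where "\<eta> = (\<lambda>t. t * h t)"
  have cvx_sub: "convex_on {a..b} \<eta>" if "0 \<le> a" "b \<le> 1" for a b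
    unfolding \<eta>_def by (rule convex_on_subset[OF cvx]) (use that in auto)
  have der: "(\<eta> has_real_derivative marg h c) (at c within {0<..1})" if "0 < c" "c \<le> 1" for c
    unfolding \<eta>_def using diff that by (intro has_real_derivative_times_marg) auto
  have der_left: "(\<eta> has_real_derivative marg h c) (at_left c)" if "0 < c" "c \<le> 1" for c
    by (rule has_real_derivative_at_left_if_within[OF der[OF that], of "c/2"]) (use that in auto)
  have der_right: "(\<eta> has_real_derivative marg h c) (at_right c)" if "0 < c" "c < 1" for c
    by (rule has_real_derivative_at_right_if_within[OF der, of c 1]) (use that in auto)
  have h_le_marg: "h t \<le> marg h t" if "0 < t" "t \<le> 1" for t
  proof -
    have "(\<eta> t - \<eta> 0) / (t - 0) \<le> marg h t"
      using convex_on_slope_le_left_derivative[OF cvx_sub[of 0 t] _ der_left[of t]] that by simp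
    then show ?thesis using that by (simp add: \<eta>_def)
  qed
  fix s t :: real assume s: "s \<in> {0..1}" and t: "t \<in> {0..1}" and "s \<le> t"
  consider "s = t" | "s = 0" "0 < t" | "0 < s" "s < t"
    using s \<open>s \<le> t\<close> by fastforce
  then show "marg h s \<le> marg h t"
  proof cases
    case 2
    then have "marg h s = h 0" by (simp add: marg_def)
    also have "\<dots> \<le> h t"
      using mono_onD[OF mono_on_if_convex_on_times[OF cvx cont0]] 2 t by simp
    also have "\<dots> \<le> marg h t" using h_le_marg 2 t by simp
    finally show ?thesis .
  next
    case 3
    have "marg h s \<le> (\<eta> t - \<eta> s) / (t - s)"
      using convex_on_right_derivative_le_slope[OF cvx_sub[of s t] _ der_right[of s]] 3 t by simp
    also have "\<dots> \<le> marg h t"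
      using convex_on_slope_le_left_derivative[OF cvx_sub[of s t] _ der_left[of t]] 3 t by simp
    finally show ?thesis .
  qed simp
qed

text \<open>The cells of the statement are \<open>laguerre_cell \<Omega> (\<lambda>j y. norm (y - x j) powr p) w k i\<close>.\<close>

definition laguerre_cell :: "'a set \<Rightarrow> (nat \<Rightarrow> 'a \<Rightarrow> real) \<Rightarrow> (nat \<Rightarrow> real) \<Rightarrow> nat \<Rightarrow> nat \<Rightarrow> 'a set"
  where "laguerre_cell \<Omega> c w k i = {y\<in>\<Omega>. \<forall>j<k. j \<noteq> i \<longrightarrow> c i y + w i < c j y + w j}"

lemma laguerre_cell_in_sets:
  assumes "\<Omega> \<in> sets M" and c_meas: "\<forall>j<k. c j \<in> borel_measurable M" and "i < k"
  shows "laguerre_cell \<Omega> c w k i \<in> sets M"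
proof -
  have "Measurable.pred M (\<lambda>y. \<forall>j. j < k \<longrightarrow> j \<noteq> i \<longrightarrow> c i y + w i < c j y + w j)"
  proof (intro pred_intros_countable(1) allI)
    fix j
    show "Measurable.pred M (\<lambda>y. j < k \<longrightarrow> j \<noteq> i \<longrightarrow> c i y + w i < c j y + w j)"
    proof (cases "j < k")
      case True
      have [measurable]: "c i \<in> borel_measurable M" "c j \<in> borel_measurable M"
        using c_meas \<open>i < k\<close> True by auto
      show ?thesis by measurable
    qed simp
  qed
  then show ?thesis
    unfolding laguerre_cell_def using assms(1) by measurable
qed

lemma laguerre_cell_subset_if_least_weight_increase:
  assumes "\<forall>j<k. w' i - w i \<le> w' j - w j"
  shows "laguerre_cell \<Omega> c w k i \<subseteq> laguerre_cell \<Omega> c w' k i"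
  using assms unfolding laguerre_cell_def by fastforce

lemma laguerre_cell_cong:
  "\<forall>j<k. w j = w' j \<Longrightarrow> i < k \<Longrightarrow> laguerre_cell \<Omega> c w k i = laguerre_cell \<Omega> c w' k i"
  unfolding laguerre_cell_def by auto

lemma all_le_if_le_at_min_gap:
  fixes a b :: "nat \<Rightarrow> real"
  assumes "\<And>i. i < k \<Longrightarrow> \<forall>j<k. b i - a i \<le> b j - a j \<Longrightarrow> a i \<le> b i"
  shows "\<forall>i<k. a i \<le> b i"
proof (cases "k = 0")
  case False
  let ?gaps = "(\<lambda>j. b j - a j) ` {..<k}"
  have "Min ?gaps \<in> ?gaps" using False by (intro Min_in) auto
  then obtain i where i: "i < k" "b i - a i = Min ?gaps" by auto
  then have "\<forall>j<k. b i - a i \<le> b j - a j" by simp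
  with assms i(1) show ?thesis by fastforce
qed simp

context
  fixes \<Omega> :: "'a::euclidean_space set" and f :: "'a \<Rightarrow> real"
  assumes \<Omega>_borel: "\<Omega> \<in> sets borel"
    and f_nonneg: "\<forall>y\<in>\<Omega>. 0 \<le> f y"
    and f_int: "set_integrable lebesgue \<Omega> f"
begin

lemma f_negligible_iff_AE:
  assumes "S \<in> sets lebesgue"
  shows "f_negligible \<Omega> f S \<longleftrightarrow> (AE y in lebesgue. y \<in> S \<inter> \<Omega> \<longrightarrow> f y = 0)"
proof -
  have [measurable]: "(\<lambda>y. indicator \<Omega> y * f y) \<in> borel_measurable lebesgue"
    using borel_measurable_integrable[OF f_int[unfolded set_integrable_def]] by simp
  have [measurable]: "S \<in> sets lebesgue" by fact
  have "(\<lambda>y. ennreal (indicator \<Omega> y * f y) * indicator S y) \<in> borel_measurable lebesgue"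
    by measurable
  also have "(\<lambda>y. ennreal (indicator \<Omega> y * f y) * indicator S y)
           = (\<lambda>y. ennreal (f y) * indicator (S \<inter> \<Omega>) y)"
    by (auto simp: indicator_def)
  finally have "f_negligible \<Omega> f S \<longleftrightarrow> (AE y in lebesgue. ennreal (f y) * indicator (S \<inter> \<Omega>) y = 0)"
    unfolding f_negligible_def by (rule nn_integral_0_iff_AE)
  also have "\<dots> \<longleftrightarrow> (AE y in lebesgue. y \<in> S \<inter> \<Omega> \<longrightarrow> f y = 0)"
    using f_nonneg by (intro AE_cong) (auto simp: indicator_def)
  finally show ?thesis .
qed

lemma f_sym_negligible_iff_AE:
  assumes "S \<in> sets lebesgue" "T \<in> sets lebesgue"
  shows "f_sym_negligible \<Omega> f S T \<longleftrightarrow>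
           (AE y in lebesgue. y \<in> \<Omega> \<longrightarrow> (y \<in> S \<longleftrightarrow> y \<in> T) \<or> f y = 0)"
  unfolding f_sym_negligible_def using assms
  by (subst f_negligible_iff_AE) (auto intro!: AE_cong)

lemma f_sym_negligible_trans:
  assumes "S \<in> sets lebesgue" "T \<in> sets lebesgue" "C \<in> sets lebesgue"
    and "f_sym_negligible \<Omega> f S C" "f_sym_negligible \<Omega> f T C"
  shows "f_sym_negligible \<Omega> f S T"
  using assms by (simp add: f_sym_negligible_iff_AE) (elim AE_mp; rule AE_I2; blast)

lemma mass_nonneg: "0 \<le> mass \<Omega> f S"
  unfolding mass_def set_lebesgue_integral_def
  using f_nonneg by (intro integral_nonneg_AE) (auto simp: indicator_def)

lemma set_integrable_restrict: "S \<in> sets lebesgue \<Longrightarrow> set_integrable lebesgue (S \<inter> \<Omega>) f"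
  using \<Omega>_borel by (intro set_integrable_subset[OF f_int]) auto

lemma mass_le_if_negligible_diff:
  assumes "S \<in> sets lebesgue" "T \<in> sets lebesgue" "f_negligible \<Omega> f (S - T)"
  shows "mass \<Omega> f S \<le> mass \<Omega> f T"
proof -
  have "AE y in lebesgue. y \<in> (S - T) \<inter> \<Omega> \<longrightarrow> f y = 0"
    using assms by (simp add: f_negligible_iff_AE sets.Diff)
  then have "AE y in lebesgue. indicator (S \<inter> \<Omega>) y * f y \<le> indicator (T \<inter> \<Omega>) y * f y"
    by eventually_elim (use f_nonneg in \<open>auto simp: indicator_def\<close>)
  then show ?thesis
    using set_integrable_restrict assms(1,2)
    unfolding mass_def set_lebesgue_integral_def set_integrable_def
    by (intro integral_mono_AE) auto
qed

lemma mass_le_total_mass: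
  "S \<in> sets lebesgue \<Longrightarrow> mass \<Omega> f S \<le> (LINT y:\<Omega>|lebesgue. f y)"
  using mass_le_if_negligible_diff[of S UNIV] by (simp add: mass_def f_negligible_def)

lemma mass_le_if_sym_negligible_subset:
  assumes meas: "S \<in> sets lebesgue" "T \<in> sets lebesgue" "C \<in> sets lebesgue" "D \<in> sets lebesgue"
    and "f_sym_negligible \<Omega> f S C" "f_sym_negligible \<Omega> f T D" "C \<subseteq> D"
  shows "mass \<Omega> f S \<le> mass \<Omega> f T"
proof (rule mass_le_if_negligible_diff)
  show "f_negligible \<Omega> f (S - T)"
    using assms by (simp add: f_sym_negligible_iff_AE f_negligible_iff_AE sets.Diff)
      (elim AE_mp; rule AE_I2; blast)
qed (use meas in auto)

lemma laguerre_weights_le: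
  fixes c :: "nat \<Rightarrow> 'a \<Rightarrow> real" and g :: "nat \<Rightarrow> real \<Rightarrow> real" and A B :: "nat \<Rightarrow> 'a set"
  assumes f_one: "(LINT y:\<Omega>|lebesgue. f y) = 1"
    and c_meas: "\<forall>j<k. c j \<in> borel_measurable borel"
    and g_mono: "\<forall>i<k. mono_on {0..1} (g i)"
    and A_meas: "\<forall>i<k. A i \<in> sets lebesgue" and B_meas: "\<forall>i<k. B i \<in> sets lebesgue"
    and A_cells: "\<forall>i<k. f_sym_negligible \<Omega> f (A i) (laguerre_cell \<Omega> c (\<lambda>j. g j (mass \<Omega> f (A j))) k i)"
    and B_cells: "\<forall>i<k. f_sym_negligible \<Omega> f (B i) (laguerre_cell \<Omega> c (\<lambda>j. g j (mass \<Omega> f (B j))) k i)"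
  shows "\<forall>i<k. g i (mass \<Omega> f (A i)) \<le> g i (mass \<Omega> f (B i))"
proof (rule all_le_if_le_at_min_gap)
  fix i assume i: "i < k"
    and min_gap: "\<forall>j<k. g i (mass \<Omega> f (B i)) - g i (mass \<Omega> f (A i))
                      \<le> g j (mass \<Omega> f (B j)) - g j (mass \<Omega> f (A j))"
  have cell_meas: "laguerre_cell \<Omega> c w k i \<in> sets lebesgue" for w
    using laguerre_cell_in_sets[OF \<Omega>_borel c_meas i] by simp
  have "mass \<Omega> f (A i) \<le> mass \<Omega> f (B i)"
  proof (rule mass_le_if_sym_negligible_subset)
    show "laguerre_cell \<Omega> c (\<lambda>j. g j (mass \<Omega> f (A j))) k i
          \<subseteq> laguerre_cell \<Omega> c (\<lambda>j. g j (mass \<Omega> f (B j))) k i"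
      using min_gap by (rule laguerre_cell_subset_if_least_weight_increase)
  qed (use A_meas B_meas cell_meas A_cells B_cells i in auto)
  moreover have "mass \<Omega> f (B i) \<le> 1"
    using mass_le_total_mass B_meas i f_one by metis
  ultimately show "g i (mass \<Omega> f (A i)) \<le> g i (mass \<Omega> f (B i))"
    using g_mono i mass_nonneg by (auto intro: mono_onD)
qed

end

theorem lemma3p6:
  fixes \<Omega> :: "'a::euclidean_space set" and f :: "'a \<Rightarrow> real" and p :: real
    and k :: nat and x :: "nat \<Rightarrow> 'a" and h :: "nat \<Rightarrow> real \<Rightarrow> real"
    and A B :: "nat \<Rightarrow> 'a set"
  assumes \<Omega>_borel: "\<Omega> \<in> sets borel" and \<Omega>_bdd: "bounded \<Omega>"
    and f_nonneg: "\<forall>y\<in>\<Omega>. f y \<ge> 0"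
    and f_int: "set_integrable lebesgue \<Omega> f"
    and f_one: "(LINT y:\<Omega>|lebesgue. f y) = 1"
    and p: "p \<ge> 1"
    and x_in: "\<forall>i<k. x i \<in> \<Omega>"
    and h_nonneg: "\<forall>i<k. \<forall>t\<in>{0..1}. h i t \<ge> 0"
    and h_diff: "\<forall>i<k. \<forall>t\<in>{0<..1}. h i differentiable (at t within {0<..1})"
    and h_cont0: "\<forall>i<k. continuous (at 0 within {0..1}) (h i)"
    and h_convex: "\<forall>i<k. convex_on {0..1} (\<lambda>t. t * h i t)"
    and A_part: "f_partition \<Omega> f k A"
    and A_eq: "\<forall>i<k. f_sym_negligible \<Omega> f (A i)
                 {y\<in>\<Omega>. \<forall>j<k. j \<noteq> i \<longrightarrow>
                    norm (y - x i) powr p + marg (h i) (mass \<Omega> f (A i))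
                    < norm (y - x j) powr p + marg (h j) (mass \<Omega> f (A j))}"
    and B_part: "f_partition \<Omega> f k B"
    and B_eq: "\<forall>i<k. f_sym_negligible \<Omega> f (B i)
                 {y\<in>\<Omega>. \<forall>j<k. j \<noteq> i \<longrightarrow>
                    norm (y - x i) powr p + marg (h i) (mass \<Omega> f (B i))
                    < norm (y - x j) powr p + marg (h j) (mass \<Omega> f (B j))}"
  shows "\<forall>i<k. f_sym_negligible \<Omega> f (A i) (B i)"
proof -
  define c where "c = (\<lambda>j y. norm (y - x j) powr p)"
  define wA where "wA = (\<lambda>j. marg (h j) (mass \<Omega> f (A j)))"
  define wB where "wB = (\<lambda>j. marg (h j) (mass \<Omega> f (B j)))"
  have c_meas: "\<forall>j<k. c j \<in> borel_measurable borel"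
    unfolding c_def by simp
  have marg_mono: "\<forall>i<k. mono_on {0..1} (marg (h i))"
    using h_diff h_cont0 h_convex by (simp add: marg_mono_on)
  have A_meas: "\<forall>i<k. A i \<in> sets lebesgue" and B_meas: "\<forall>i<k. B i \<in> sets lebesgue"
    using A_part B_part unfolding f_partition_def by simp_all
  have A_cells: "\<forall>i<k. f_sym_negligible \<Omega> f (A i) (laguerre_cell \<Omega> c wA k i)"
    using A_eq unfolding laguerre_cell_def c_def wA_def .
  have B_cells: "\<forall>i<k. f_sym_negligible \<Omega> f (B i) (laguerre_cell \<Omega> c wB k i)"
    using B_eq unfolding laguerre_cell_def c_def wB_def .
  note weights_le = laguerre_weights_le[OF \<Omega>_borel f_nonneg f_int f_one c_meas marg_mono]
  have "\<forall>i<k. wA i \<le> wB i"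
    using weights_le[OF A_meas B_meas] A_cells B_cells unfolding wA_def wB_def by simp
  moreover have "\<forall>i<k. wB i \<le> wA i"
    using weights_le[OF B_meas A_meas] A_cells B_cells unfolding wA_def wB_def by simp
  ultimately have same_cells: "\<forall>i<k. laguerre_cell \<Omega> c wA k i = laguerre_cell \<Omega> c wB k i"
    by (simp add: laguerre_cell_cong order_antisym)
  show ?thesis
  proof (intro allI impI)
    fix i assume "i < k"
    then have "laguerre_cell \<Omega> c wA k i \<in> sets lebesgue"
      using laguerre_cell_in_sets[OF \<Omega>_borel c_meas] by simp
    then show "f_sym_negligible \<Omega> f (A i) (B i)"
      using f_sym_negligible_trans[OF \<Omega>_borel f_nonneg f_int] \<open>i < k\<close>
        A_meas B_meas A_cells B_cells same_cells by metis
  qed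
qed

end
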